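(* Let $\boldsymbol{\mathcal{D}} = \begin{pmatrix}\boldsymbol{W}_p\\ \boldsymbol{U}_f \\ \boldsymbol{Y}_f\end{pmatrix}\in\mathbb{R}^{L(m+p)\times \ell}$ be a data matrix with full row rank, with LQ decomposition $\boldsymbol{\mathcal{D}} = \begin{pmatrix} \boldsymbol{L}_{11} & \boldsymbol{0} & \boldsymbol{0} & \boldsymbol{0} \\ \boldsymbol{L}_{21} & \boldsymbol{L}_{22} & \boldsymbol{0} & \boldsymbol{0} \\ \boldsymbol{L}_{31} & \boldsymbol{L}_{32} & \boldsymbol{L}_{33} & \boldsymbol{0} \end{pmatrix}\begin{pmatrix}\boldsymbol{Q}_1\\ \boldsymbol{Q}_2\\ \boldsymbol{Q}_3\\ \boldsymbol{Q}_4\end{pmatrix}$ as described in the context, and let $\lambda_a>0$. Then DeePC with regularization $h(\boldsymbol{a}) = \lambda_a \|\boldsymbol{a}\|_2^2$ is equivalent to $\boldsymbol{\gamma}$-DDPC with regularization $\tilde h(\boldsymbol{\gamma}) = \lambda_a \|\boldsymbol{\gamma}_2\|_2^2 + \lambda_a \|\boldsymbol{\gamma}_3\|_2^2$.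
   Context: Data: $m$ inputs, $p$ outputs, past horizon $N_p$, future horizon $N_f$, $L=N_p+N_f$, and $\ell$ data trajectories. The data matrix is partitioned as $\boldsymbol{\mathcal{D}} = \begin{pmatrix}\boldsymbol{W}_p\\ \boldsymbol{U}_f \\ \boldsymbol{Y}_f\end{pmatrix}$ with $\boldsymbol{W}_p\in\mathbb{R}^{N_p(m+p)\times\ell}$ (past inputs and outputs), $\boldsymbol{U}_f\in\mathbb{R}^{mN_f\times \ell}$, $\boldsymbol{Y}_f\in\mathbb{R}^{pN_f\times\ell}$; it is assumed to have full row rank. The LQ decomposition has lower block-triangular factor with non-singular square diagonal blocks $\boldsymbol{L}_{11},\boldsymbol{L}_{22},\boldsymbol{L}_{33}$ and $\boldsymbol{Q}=\begin{pmatrix}\boldsymbol{Q}_1^\top & \boldsymbol{Q}_2^\top&\boldsymbol{Q}_3^\top&\boldsymbol{Q}_4^\top\end{pmatrix}^\top\in\mathbb{R}^{\ell\times\ell}$ orthogonal (so $\boldsymbol{Q}_i\boldsymbol{Q}_i^\top=\boldsymbol{I}$, $\boldsymbol{Q}_i\boldsymbol{Q}_j^\top=\boldsymbol{0}$ for $i\neq j$); $\boldsymbol{\gamma}_i := \boldsymbol{Q}_i\boldsymbol{a}$. Given current past I/O data $\boldsymbol{\xi}\in\mathbb{R}^{N_p(m+p)}$, a cost $J(\boldsymbol{\xi},\mathbf{u}_f,\mathbf{y}_f)$ and constraint sets $\mathcal{U}\subseteq\mathbb{R}^{mN_f}$, $\mathcal{Y}\subseteq\mathbb{R}^{pN_f}$: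 DeePC with regularization $h$ is the problem $\min_{\mathbf{u}_f,\mathbf{y}_f,\boldsymbol{a}} J(\boldsymbol{\xi},\mathbf{u}_f,\mathbf{y}_f)+h(\boldsymbol{a})$ s.t. $(\boldsymbol{\xi};\mathbf{u}_f;\mathbf{y}_f)=\boldsymbol{\mathcal{D}}\boldsymbol{a}$, $(\mathbf{u}_f,\mathbf{y}_f)\in\mathcal{U}\times\mathcal{Y}$. $\boldsymbol{\gamma}$-DDPC with regularization $\tilde h$ is the problem $\min_{\mathbf{u}_f,\mathbf{y}_f,\boldsymbol{\gamma}_2,\boldsymbol{\gamma}_3} J(\boldsymbol{\xi},\mathbf{u}_f,\mathbf{y}_f)+\tilde h(\boldsymbol{\gamma})$ s.t. $\boldsymbol{\gamma}_1=\boldsymbol{L}_{11}^{-1}\boldsymbol{\xi}$, $\mathbf{u}_f = \boldsymbol{L}_{21}\boldsymbol{\gamma}_1+\boldsymbol{L}_{22}\boldsymbol{\gamma}_2$, $\mathbf{y}_f=\boldsymbol{L}_{31}\boldsymbol{\gamma}_1+\boldsymbol{L}_{32}\boldsymbol{\gamma}_2+\boldsymbol{L}_{33}\boldsymbol{\gamma}_3$, $(\mathbf{u}_f,\mathbf{y}_f)\in\mathcal{U}\times\mathcal{Y}$ (i.e., $\boldsymbol{\gamma}_4=\boldsymbol{0}$ is fixed). Two such optimal control problems are called equivalent if, for every $\boldsymbol{\xi}$, they yield the same optimal predicted input/output trajectories $(\mathbf{u}_f^\ast,\mathbf{y}_f^\ast)$ (not necessarily the same optimal cost). *)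

theory Defs
  imports "Jordan_Normal_Form.DL_Rank"
begin

definition sqnorm :: "real vec \<Rightarrow> real" where
  "sqnorm v = v \<bullet> v"

definition deepc_feasible ::
  "real mat \<Rightarrow> nat \<Rightarrow> real vec set \<Rightarrow> real vec set \<Rightarrow> real vec \<Rightarrow> real vec \<Rightarrow> real vec \<Rightarrow> real vec \<Rightarrow> bool" where
  "deepc_feasible D ell U Y xi u y a \<longleftrightarrow>
     a \<in> carrier_vec ell \<and> D *\<^sub>v a = xi @\<^sub>v u @\<^sub>v y \<and> u \<in> U \<and> y \<in> Y"

definition deepc_opt ::
  "(real vec \<Rightarrow> real vec \<Rightarrow> real vec \<Rightarrow> real) \<Rightarrow> (real vec \<Rightarrow> real) \<Rightarrow> real mat \<Rightarrow> nat \<Rightarrow>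
   real vec set \<Rightarrow> real vec set \<Rightarrow> real vec \<Rightarrow> (real vec \<times> real vec) set" where
  "deepc_opt J h D ell U Y xi =
     {(u, y). \<exists>a. deepc_feasible D ell U Y xi u y a \<and>
        (\<forall>u' y' a'. deepc_feasible D ell U Y xi u' y' a' \<longrightarrow>
            J xi u y + h a \<le> J xi u' y' + h a')}"

text \<open>gamma-DDPC: decision variables (u_f, y_f, gamma_2, gamma_3);
  gamma_1 = L11^{-1} xi (the unique solution of L11 gamma_1 = xi), gamma_4 = 0 fixed.\<close>
definition ddpc_gamma1 :: "real mat \<Rightarrow> real vec \<Rightarrow> real vec" where
  "ddpc_gamma1 L11 xi = (THE g. g \<in> carrier_vec (dim_col L11) \<and> L11 *\<^sub>v g = xi)"

definition ddpc_feasible ::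
  "real mat \<Rightarrow> real mat \<Rightarrow> real mat \<Rightarrow> real mat \<Rightarrow> real mat \<Rightarrow> real mat \<Rightarrow>
   real vec set \<Rightarrow> real vec set \<Rightarrow> real vec \<Rightarrow> real vec \<Rightarrow> real vec \<Rightarrow> real vec \<Rightarrow> real vec \<Rightarrow> bool" where
  "ddpc_feasible L11 L21 L22 L31 L32 L33 U Y xi u y g2 g3 \<longleftrightarrow>
     g2 \<in> carrier_vec (dim_col L22) \<and> g3 \<in> carrier_vec (dim_col L33) \<and>
     u = L21 *\<^sub>v ddpc_gamma1 L11 xi + L22 *\<^sub>v g2 \<and>
     y = L31 *\<^sub>v ddpc_gamma1 L11 xi + L32 *\<^sub>v g2 + L33 *\<^sub>v g3 \<and>
     u \<in> U \<and> y \<in> Y"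

definition ddpc_opt ::
  "(real vec \<Rightarrow> real vec \<Rightarrow> real vec \<Rightarrow> real) \<Rightarrow> (real vec \<times> real vec \<times> real vec \<times> real vec \<Rightarrow> real) \<Rightarrow>
   real mat \<Rightarrow> real mat \<Rightarrow> real mat \<Rightarrow> real mat \<Rightarrow> real mat \<Rightarrow> real mat \<Rightarrow> nat \<Rightarrow>
   real vec set \<Rightarrow> real vec set \<Rightarrow> real vec \<Rightarrow> (real vec \<times> real vec) set" where
  "ddpc_opt J ht L11 L21 L22 L31 L32 L33 n4 U Y xi =
     {(u, y). \<exists>g2 g3. ddpc_feasible L11 L21 L22 L31 L32 L33 U Y xi u y g2 g3 \<and>
        (\<forall>u' y' g2' g3'. ddpc_feasible L11 L21 L22 L31 L32 L33 U Y xi u' y' g2' g3' \<longrightarrow>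
            J xi u y + ht (ddpc_gamma1 L11 xi, g2, g3, 0\<^sub>v n4)
              \<le> J xi u' y' + ht (ddpc_gamma1 L11 xi, g2', g3', 0\<^sub>v n4))}"

definition equivalent_ocp ::
  "nat \<Rightarrow> (real vec \<Rightarrow> (real vec \<times> real vec) set) \<Rightarrow> (real vec \<Rightarrow> (real vec \<times> real vec) set) \<Rightarrow> bool" where
  "equivalent_ocp n P1 P2 \<longleftrightarrow> (\<forall>xi \<in> carrier_vec n. P1 xi = P2 xi)"

end

theory Submission
  imports Defs
begin

(* The change of variables gamma = Q a is orthogonal, so |a|^2 is the sum of the |gamma_i|^2.
   Under it the DeePC constraint D a = (xi; u; y) becomes exactly the gamma-DDPC constraints,
   with gamma_1 = L11^-1 xi fixed by the data and gamma_4 unconstrained.  The DeePC cost is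
   therefore the gamma-DDPC cost plus the constant lam |gamma_1|^2 plus lam |gamma_4|^2, and
   the last term is minimised by gamma_4 = 0: both problems select the same trajectories. *)

lemma invertible_matE:
  assumes A: "A \<in> carrier_mat n n" and "invertible_mat A"
  obtains B where "B \<in> carrier_mat n n" "A * B = 1\<^sub>m n" "B * A = 1\<^sub>m n"
proof -
  from assms obtain B where AB: "A * B = 1\<^sub>m n" and BA: "B * A = 1\<^sub>m (dim_row B)"
    unfolding invertible_mat_def inverts_mat_def by auto
  have "dim_col B = n" using AB by (metis index_mult_mat(3) index_one_mat(3))
  moreover have "dim_row B = n" using BA A by (metis carrier_matD(2) index_mult_mat(3) index_one_mat(3))
  ultimately have "B \<in> carrier_mat n n" by blast
  with AB BA \<open>dim_row B = n\<close> show thesis using that by simp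
qed

lemma ddpc_gamma1_eqI:
  assumes A: "A \<in> carrier_mat n n" and "invertible_mat A"
    and g: "g \<in> carrier_vec n" and Ag: "A *\<^sub>v g = xi"
  shows "ddpc_gamma1 A xi = g"
proof -
  obtain B where B: "B \<in> carrier_mat n n" and BA: "B * A = 1\<^sub>m n"
    using invertible_matE[OF assms(1,2)] by blast
  have left_inverse: "B *\<^sub>v (A *\<^sub>v h) = h" if "h \<in> carrier_vec n" for h
    using that BA by (simp add: assoc_mult_mat_vec[OF B A that, symmetric])
  have "h = g" if "h \<in> carrier_vec n" "A *\<^sub>v h = xi" for h
    using left_inverse[OF that(1)] left_inverse[OF g] that(2) Ag by simp
  moreover have "dim_col A = n" using A by simp
  ultimately show ?thesis
    unfolding ddpc_gamma1_def using g Ag by (intro the_equality) blast+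
qed

lemma ddpc_gamma1_solves:
  assumes A: "A \<in> carrier_mat n n" and "invertible_mat A" and xi: "xi \<in> carrier_vec n"
  shows "ddpc_gamma1 A xi \<in> carrier_vec n" and "A *\<^sub>v ddpc_gamma1 A xi = xi"
proof -
  obtain B where B: "B \<in> carrier_mat n n" and AB: "A * B = 1\<^sub>m n"
    using invertible_matE[OF assms(1,2)] by blast
  have sol: "A *\<^sub>v (B *\<^sub>v xi) = xi"
    using AB xi by (simp add: assoc_mult_mat_vec[OF A B xi, symmetric])
  have "ddpc_gamma1 A xi = B *\<^sub>v xi"
    using ddpc_gamma1_eqI[OF assms(1,2) _ sol] B xi by simp
  then show "ddpc_gamma1 A xi \<in> carrier_vec n" and "A *\<^sub>v ddpc_gamma1 A xi = xi"
    using B xi sol by simp_all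
qed

lemma ddpc_gamma1_iff:
  assumes A: "A \<in> carrier_mat n n" and inv: "invertible_mat A"
    and g: "g \<in> carrier_vec n" and xi: "xi \<in> carrier_vec n"
  shows "A *\<^sub>v g = xi \<longleftrightarrow> g = ddpc_gamma1 A xi"
proof
  assume "A *\<^sub>v g = xi"
  then show "g = ddpc_gamma1 A xi" by (rule ddpc_gamma1_eqI[OF A inv g, symmetric])
next
  assume "g = ddpc_gamma1 A xi"
  then show "A *\<^sub>v g = xi" using ddpc_gamma1_solves(2)[OF A inv xi] by simp
qed

lemma sqnorm_nonneg: "sqnorm v \<ge> 0"
  unfolding sqnorm_def scalar_prod_def by (intro sum_nonneg) auto

lemma sqnorm_zero_vec [simp]: "sqnorm (0\<^sub>v n) = 0"
  unfolding sqnorm_def by simp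

lemma sqnorm_append:
  assumes "v \<in> carrier_vec n" "w \<in> carrier_vec k"
  shows "sqnorm (v @\<^sub>v w) = sqnorm v + sqnorm w"
  unfolding sqnorm_def using scalar_prod_append[OF assms assms] .

context
  fixes n :: nat and Q :: "real mat"
  assumes Q: "Q \<in> carrier_mat n n" and Q_orth: "Q * Q\<^sup>T = 1\<^sub>m n"
begin

lemma orth_transpose_mult_vec_cancel:
  assumes a: "a \<in> carrier_vec n"
  shows "Q\<^sup>T *\<^sub>v (Q *\<^sub>v a) = a"
proof -
  have QT: "Q\<^sup>T \<in> carrier_mat n n" using Q by simp
  have "Q\<^sup>T * Q = 1\<^sub>m n" using mat_mult_left_right_inverse[OF Q QT Q_orth] .
  then show ?thesis using a by (simp add: assoc_mult_mat_vec[OF QT Q a, symmetric])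
qed

lemma orth_mult_vec_transpose_cancel:
  assumes g: "g \<in> carrier_vec n"
  shows "Q *\<^sub>v (Q\<^sup>T *\<^sub>v g) = g"
proof -
  have QT: "Q\<^sup>T \<in> carrier_mat n n" using Q by simp
  show ?thesis using Q_orth g by (simp add: assoc_mult_mat_vec[OF Q QT g, symmetric])
qed

lemma orth_sqnorm_mult_vec:
  assumes a: "a \<in> carrier_vec n"
  shows "sqnorm (Q *\<^sub>v a) = sqnorm a"
proof -
  have Qa: "Q *\<^sub>v a \<in> carrier_vec n" using Q a by simp
  have "sqnorm a = (Q\<^sup>T *\<^sub>v (Q *\<^sub>v a)) \<bullet> a"
    by (simp add: sqnorm_def orth_transpose_mult_vec_cancel[OF a])
  also have "\<dots> = sqnorm (Q *\<^sub>v a)"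
    unfolding sqnorm_def by (rule transpose_vec_mult_scalar[OF Q a Qa])
  finally show ?thesis by simp
qed

end

definition opt_trajectories ::
  "('u \<Rightarrow> 'y \<Rightarrow> 'a \<Rightarrow> bool) \<Rightarrow> ('u \<Rightarrow> 'y \<Rightarrow> 'a \<Rightarrow> real) \<Rightarrow> ('u \<times> 'y) set" where
  "opt_trajectories F cost =
     {(u, y). \<exists>a. F u y a \<and> (\<forall>u' y' a'. F u' y' a' \<longrightarrow> cost u y a \<le> cost u' y' a')}"

lemma opt_trajectories_subset:
  assumes FG: "\<And>u y a. F u y a \<Longrightarrow> \<exists>b. G u y b \<and> cost\<^sub>G u y b + c \<le> cost\<^sub>F u y a"
    and GF: "\<And>u y b. G u y b \<Longrightarrow> \<exists>a. F u y a \<and> cost\<^sub>F u y a \<le> cost\<^sub>G u y b + c"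
  shows "opt_trajectories F cost\<^sub>F \<subseteq> opt_trajectories G cost\<^sub>G"
proof
  fix z assume "z \<in> opt_trajectories F cost\<^sub>F"
  then obtain u y a where z: "z = (u, y)" and "F u y a"
    and opt: "\<And>u' y' a'. F u' y' a' \<Longrightarrow> cost\<^sub>F u y a \<le> cost\<^sub>F u' y' a'"
    unfolding opt_trajectories_def by blast
  obtain b where "G u y b" and b: "cost\<^sub>G u y b + c \<le> cost\<^sub>F u y a"
    using FG[OF \<open>F u y a\<close>] by blast
  have "cost\<^sub>G u y b \<le> cost\<^sub>G u' y' b'" if b': "G u' y' b'" for u' y' b'
  proof -
    obtain a' where "F u' y' a'" and "cost\<^sub>F u' y' a' \<le> cost\<^sub>G u' y' b' + c"
      using GF[OF b'] by blast
    with b opt show ?thesis by fastforce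
  qed
  with \<open>G u y b\<close> show "z \<in> opt_trajectories G cost\<^sub>G"
    unfolding z opt_trajectories_def by blast
qed

lemma opt_trajectories_eqI:
  assumes "\<And>u y a. F u y a \<Longrightarrow> \<exists>b. G u y b \<and> cost\<^sub>G u y b + c \<le> cost\<^sub>F u y a"
    and "\<And>u y b. G u y b \<Longrightarrow> \<exists>a. F u y a \<and> cost\<^sub>F u y a \<le> cost\<^sub>G u y b + c"
  shows "opt_trajectories F cost\<^sub>F = opt_trajectories G cost\<^sub>G"
proof (rule antisym)
  show "opt_trajectories F cost\<^sub>F \<subseteq> opt_trajectories G cost\<^sub>G"
    by (rule opt_trajectories_subset) (use assms in auto)
  show "opt_trajectories G cost\<^sub>G \<subseteq> opt_trajectories F cost\<^sub>F"
    by (rule opt_trajectories_subset[where c = "- c"]) (use assms in fastforce)+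
qed

lemma deepc_opt_eq_opt_trajectories:
  "deepc_opt J h D ell U Y xi =
     opt_trajectories (deepc_feasible D ell U Y xi) (\<lambda>u y a. J xi u y + h a)"
  unfolding deepc_opt_def opt_trajectories_def ..

lemma ddpc_opt_eq_opt_trajectories:
  "ddpc_opt J ht L11 L21 L22 L31 L32 L33 n4 U Y xi =
     opt_trajectories (\<lambda>u y (g2, g3). ddpc_feasible L11 L21 L22 L31 L32 L33 U Y xi u y g2 g3)
       (\<lambda>u y (g2, g3). J xi u y + ht (ddpc_gamma1 L11 xi, g2, g3, 0\<^sub>v n4))"
  unfolding ddpc_opt_def opt_trajectories_def by auto

locale lq_data =
  fixes n1 n2 n3 n4 ell :: nat
    and L11 L21 L22 L31 L32 L33 Q1 Q2 Q3 Q4 Q D :: "real mat"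
  assumes L11: "L11 \<in> carrier_mat n1 n1" and L21: "L21 \<in> carrier_mat n2 n1"
    and L22: "L22 \<in> carrier_mat n2 n2" and L31: "L31 \<in> carrier_mat n3 n1"
    and L32: "L32 \<in> carrier_mat n3 n2" and L33: "L33 \<in> carrier_mat n3 n3"
    and L11_invertible: "invertible_mat L11"
    and Q1: "Q1 \<in> carrier_mat n1 ell" and Q2: "Q2 \<in> carrier_mat n2 ell"
    and Q3: "Q3 \<in> carrier_mat n3 ell" and Q4: "Q4 \<in> carrier_mat n4 ell"
    and Q_def: "Q = Q1 @\<^sub>r Q2 @\<^sub>r Q3 @\<^sub>r Q4"
    and Q_square: "Q \<in> carrier_mat ell ell"
    and Q_orth: "Q * Q\<^sup>T = 1\<^sub>m ell"
    and D_def: "D = (L11 * Q1) @\<^sub>r (L21 * Q1 + L22 * Q2) @\<^sub>r (L31 * Q1 + L32 * Q2 + L33 * Q3)"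
begin

lemma ell_eq: "ell = n1 + n2 + n3 + n4"
proof -
  have "Q \<in> carrier_mat (n1 + (n2 + (n3 + n4))) ell"
    unfolding Q_def using Q1 Q2 Q3 Q4 by (intro carrier_append_rows)
  then show ?thesis using Q_square by (metis carrier_matD(1) add.assoc)
qed

lemma Q_mult_vec:
  assumes a: "a \<in> carrier_vec ell"
  shows "Q *\<^sub>v a = (Q1 *\<^sub>v a) @\<^sub>v (Q2 *\<^sub>v a) @\<^sub>v (Q3 *\<^sub>v a) @\<^sub>v (Q4 *\<^sub>v a)"
proof -
  have Q34: "Q3 @\<^sub>r Q4 \<in> carrier_mat (n3 + n4) ell" using Q3 Q4 by blast
  have Q234: "Q2 @\<^sub>r Q3 @\<^sub>r Q4 \<in> carrier_mat (n2 + (n3 + n4)) ell" using Q2 Q34 by blast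
  show ?thesis unfolding Q_def
    mat_mult_append[OF Q1 Q234 a] mat_mult_append[OF Q2 Q34 a] mat_mult_append[OF Q3 Q4 a] ..
qed

lemma sqnorm_eq_sum_Q_blocks:
  assumes a: "a \<in> carrier_vec ell"
  shows "sqnorm a = sqnorm (Q1 *\<^sub>v a) + sqnorm (Q2 *\<^sub>v a) + sqnorm (Q3 *\<^sub>v a) + sqnorm (Q4 *\<^sub>v a)"
proof -
  have v1: "Q1 *\<^sub>v a \<in> carrier_vec n1" and v2: "Q2 *\<^sub>v a \<in> carrier_vec n2"
    and v3: "Q3 *\<^sub>v a \<in> carrier_vec n3" and v4: "Q4 *\<^sub>v a \<in> carrier_vec n4"
    using Q1 Q2 Q3 Q4 a by auto
  have "sqnorm a = sqnorm (Q *\<^sub>v a)"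
    using orth_sqnorm_mult_vec[OF Q_square Q_orth a] by simp
  also have "\<dots> = sqnorm (Q1 *\<^sub>v a) + (sqnorm (Q2 *\<^sub>v a) + (sqnorm (Q3 *\<^sub>v a) + sqnorm (Q4 *\<^sub>v a)))"
    unfolding Q_mult_vec[OF a] using v1 v2 v3 v4
    by (simp add: sqnorm_append[of _ n1 _ "n2 + (n3 + n4)"] sqnorm_append[of _ n2 _ "n3 + n4"]
        sqnorm_append[OF v3 v4])
  finally show ?thesis by simp
qed

lemma Q_blocks_transpose_mult_vec:
  assumes g1: "g1 \<in> carrier_vec n1" and g2: "g2 \<in> carrier_vec n2"
    and g3: "g3 \<in> carrier_vec n3" and g4: "g4 \<in> carrier_vec n4"
  defines "a \<equiv> Q\<^sup>T *\<^sub>v (g1 @\<^sub>v g2 @\<^sub>v g3 @\<^sub>v g4)"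
  shows "a \<in> carrier_vec ell"
    and "Q1 *\<^sub>v a = g1" "Q2 *\<^sub>v a = g2" "Q3 *\<^sub>v a = g3" "Q4 *\<^sub>v a = g4"
proof -
  have g: "g1 @\<^sub>v g2 @\<^sub>v g3 @\<^sub>v g4 \<in> carrier_vec ell"
    unfolding ell_eq using g1 g2 g3 g4 by (simp add: add.assoc)
  show a: "a \<in> carrier_vec ell" unfolding a_def using Q_square g by simp
  have "Q *\<^sub>v a = g1 @\<^sub>v g2 @\<^sub>v g3 @\<^sub>v g4"
    unfolding a_def by (rule orth_mult_vec_transpose_cancel[OF Q_square Q_orth g])
  then have "(Q1 *\<^sub>v a) @\<^sub>v (Q2 *\<^sub>v a) @\<^sub>v (Q3 *\<^sub>v a) @\<^sub>v (Q4 *\<^sub>v a) = g1 @\<^sub>v g2 @\<^sub>v g3 @\<^sub>v g4"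
    unfolding Q_mult_vec[OF a] .
  moreover have "Q1 *\<^sub>v a \<in> carrier_vec n1" "Q2 *\<^sub>v a \<in> carrier_vec n2" "Q3 *\<^sub>v a \<in> carrier_vec n3"
    using Q1 Q2 Q3 a by auto
  ultimately show "Q1 *\<^sub>v a = g1" "Q2 *\<^sub>v a = g2" "Q3 *\<^sub>v a = g3" "Q4 *\<^sub>v a = g4"
    using append_vec_eq g1 g2 g3 by metis+
qed

lemma D_mult_vec:
  assumes a: "a \<in> carrier_vec ell"
  shows "D *\<^sub>v a = (L11 *\<^sub>v (Q1 *\<^sub>v a)) @\<^sub>v (L21 *\<^sub>v (Q1 *\<^sub>v a) + L22 *\<^sub>v (Q2 *\<^sub>v a))
    @\<^sub>v (L31 *\<^sub>v (Q1 *\<^sub>v a) + L32 *\<^sub>v (Q2 *\<^sub>v a) + L33 *\<^sub>v (Q3 *\<^sub>v a))"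
proof -
  have W: "L11 * Q1 \<in> carrier_mat n1 ell" and U: "L21 * Q1 + L22 * Q2 \<in> carrier_mat n2 ell"
    and Y: "L31 * Q1 + L32 * Q2 + L33 * Q3 \<in> carrier_mat n3 ell"
    using L11 L21 L22 L31 L32 L33 Q1 Q2 Q3 by auto
  have UY: "(L21 * Q1 + L22 * Q2) @\<^sub>r (L31 * Q1 + L32 * Q2 + L33 * Q3) \<in> carrier_mat (n2 + n3) ell"
    using U Y by blast
  show ?thesis
    unfolding D_def mat_mult_append[OF W UY a] mat_mult_append[OF U Y a]
    using L11 L21 L22 L31 L32 L33 Q1 Q2 Q3 a
    by (simp add: add_mult_distrib_mat_vec[of _ n2 ell] add_mult_distrib_mat_vec[of _ n3 ell])
qed

lemma D_mult_vec_eq_iff: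
  assumes a: "a \<in> carrier_vec ell" and xi: "xi \<in> carrier_vec n1" and u: "u \<in> carrier_vec n2"
  shows "D *\<^sub>v a = xi @\<^sub>v u @\<^sub>v y \<longleftrightarrow>
    Q1 *\<^sub>v a = ddpc_gamma1 L11 xi \<and>
    u = L21 *\<^sub>v ddpc_gamma1 L11 xi + L22 *\<^sub>v (Q2 *\<^sub>v a) \<and>
    y = L31 *\<^sub>v ddpc_gamma1 L11 xi + L32 *\<^sub>v (Q2 *\<^sub>v a) + L33 *\<^sub>v (Q3 *\<^sub>v a)"
proof -
  have Q1a: "Q1 *\<^sub>v a \<in> carrier_vec n1" using Q1 a by simp
  have W: "L11 *\<^sub>v (Q1 *\<^sub>v a) \<in> carrier_vec n1"
    and U: "L21 *\<^sub>v (Q1 *\<^sub>v a) + L22 *\<^sub>v (Q2 *\<^sub>v a) \<in> carrier_vec n2"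
    using L11 L21 L22 Q2 Q1a a by auto
  define \<gamma>1 where "\<gamma>1 = ddpc_gamma1 L11 xi"
  have "D *\<^sub>v a = xi @\<^sub>v u @\<^sub>v y \<longleftrightarrow>
    L11 *\<^sub>v (Q1 *\<^sub>v a) = xi \<and>
    L21 *\<^sub>v (Q1 *\<^sub>v a) + L22 *\<^sub>v (Q2 *\<^sub>v a) = u \<and>
    L31 *\<^sub>v (Q1 *\<^sub>v a) + L32 *\<^sub>v (Q2 *\<^sub>v a) + L33 *\<^sub>v (Q3 *\<^sub>v a) = y"
    unfolding D_mult_vec[OF a] append_vec_eq[OF W xi] append_vec_eq[OF U u] ..
  also have "\<dots> \<longleftrightarrow> Q1 *\<^sub>v a = \<gamma>1 \<and>
    u = L21 *\<^sub>v \<gamma>1 + L22 *\<^sub>v (Q2 *\<^sub>v a) \<and>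
    y = L31 *\<^sub>v \<gamma>1 + L32 *\<^sub>v (Q2 *\<^sub>v a) + L33 *\<^sub>v (Q3 *\<^sub>v a)"
    unfolding ddpc_gamma1_iff[OF L11 L11_invertible Q1a xi, folded \<gamma>1_def] by auto
  finally show ?thesis unfolding \<gamma>1_def .
qed

lemma deepc_feasible_imp_ddpc_feasible:
  assumes U: "U \<subseteq> carrier_vec n2" and Y: "Y \<subseteq> carrier_vec n3" and xi: "xi \<in> carrier_vec n1"
    and feasible: "deepc_feasible D ell U Y xi u y a"
  shows "Q1 *\<^sub>v a = ddpc_gamma1 L11 xi"
    and "ddpc_feasible L11 L21 L22 L31 L32 L33 U Y xi u y (Q2 *\<^sub>v a) (Q3 *\<^sub>v a)"
proof -
  have a: "a \<in> carrier_vec ell" and "D *\<^sub>v a = xi @\<^sub>v u @\<^sub>v y" and "u \<in> U" "y \<in> Y"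
    using feasible unfolding deepc_feasible_def by auto
  with U Y xi show "Q1 *\<^sub>v a = ddpc_gamma1 L11 xi"
    and "ddpc_feasible L11 L21 L22 L31 L32 L33 U Y xi u y (Q2 *\<^sub>v a) (Q3 *\<^sub>v a)"
    unfolding ddpc_feasible_def using D_mult_vec_eq_iff[OF a xi] L22 L33 Q2 Q3 by auto
qed

lemma ddpc_feasible_imp_deepc_feasible:
  assumes xi: "xi \<in> carrier_vec n1"
    and feasible: "ddpc_feasible L11 L21 L22 L31 L32 L33 U Y xi u y g2 g3"
  defines "a \<equiv> Q\<^sup>T *\<^sub>v (ddpc_gamma1 L11 xi @\<^sub>v g2 @\<^sub>v g3 @\<^sub>v 0\<^sub>v n4)"
  shows "deepc_feasible D ell U Y xi u y a"
    and "sqnorm a = sqnorm (ddpc_gamma1 L11 xi) + sqnorm g2 + sqnorm g3"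
proof -
  have \<gamma>1: "ddpc_gamma1 L11 xi \<in> carrier_vec n1"
    using ddpc_gamma1_solves(1)[OF L11 L11_invertible xi] .
  have g: "g2 \<in> carrier_vec n2" "g3 \<in> carrier_vec n3" and "u \<in> U" "y \<in> Y"
    and u: "u = L21 *\<^sub>v ddpc_gamma1 L11 xi + L22 *\<^sub>v g2"
    and y: "y = L31 *\<^sub>v ddpc_gamma1 L11 xi + L32 *\<^sub>v g2 + L33 *\<^sub>v g3"
    using feasible L22 L33 unfolding ddpc_feasible_def by auto
  note blocks = Q_blocks_transpose_mult_vec[OF \<gamma>1 g zero_carrier_vec, folded a_def]
  have "u \<in> carrier_vec n2" "y \<in> carrier_vec n3"
    unfolding u y using L21 L22 L31 L32 L33 \<gamma>1 g by auto
  then have "D *\<^sub>v a = xi @\<^sub>v u @\<^sub>v y"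
    using D_mult_vec_eq_iff[OF blocks(1) xi] blocks u y by simp
  with blocks(1) \<open>u \<in> U\<close> \<open>y \<in> Y\<close> show "deepc_feasible D ell U Y xi u y a"
    unfolding deepc_feasible_def by blast
  show "sqnorm a = sqnorm (ddpc_gamma1 L11 xi) + sqnorm g2 + sqnorm g3"
    using sqnorm_eq_sum_Q_blocks[OF blocks(1)] blocks by simp
qed

theorem deepc_ridge_opt_eq_ddpc_opt:
  assumes lam: "lam \<ge> 0" and U: "U \<subseteq> carrier_vec n2" and Y: "Y \<subseteq> carrier_vec n3"
    and xi: "xi \<in> carrier_vec n1"
  shows "deepc_opt J (\<lambda>a. lam * sqnorm a) D ell U Y xi =
    ddpc_opt J (\<lambda>(g1, g2, g3, g4). lam * sqnorm g2 + lam * sqnorm g3) L11 L21 L22 L31 L32 L33 n4 U Y xi"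
proof -
  define \<gamma>1 where "\<gamma>1 = ddpc_gamma1 L11 xi"
  define F where "F = deepc_feasible D ell U Y xi"
  define G where "G = (\<lambda>u y (g2, g3). ddpc_feasible L11 L21 L22 L31 L32 L33 U Y xi u y g2 g3)"
  define cost\<^sub>F where "cost\<^sub>F = (\<lambda>u y a. J xi u y + lam * sqnorm a)"
  define cost\<^sub>G where "cost\<^sub>G = (\<lambda>u y (g2, g3). J xi u y + (lam * sqnorm g2 + lam * sqnorm g3))"
  have "opt_trajectories F cost\<^sub>F = opt_trajectories G cost\<^sub>G"
  proof (rule opt_trajectories_eqI[where c = "lam * sqnorm \<gamma>1"])
    fix u y a assume "F u y a"
    then have feasible: "deepc_feasible D ell U Y xi u y a" and a: "a \<in> carrier_vec ell"
      unfolding F_def deepc_feasible_def by auto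
    note \<gamma> = deepc_feasible_imp_ddpc_feasible[OF U Y xi feasible, folded \<gamma>1_def]
    have G: "G u y (Q2 *\<^sub>v a, Q3 *\<^sub>v a)" unfolding G_def using \<gamma>(2) by simp
    have "lam * sqnorm (Q4 *\<^sub>v a) \<ge> 0" using lam sqnorm_nonneg by simp
    then have "cost\<^sub>G u y (Q2 *\<^sub>v a, Q3 *\<^sub>v a) + lam * sqnorm \<gamma>1 \<le> cost\<^sub>F u y a"
      unfolding cost\<^sub>F_def cost\<^sub>G_def sqnorm_eq_sum_Q_blocks[OF a] \<gamma>(1)
      by (simp add: algebra_simps)
    with G show "\<exists>b. G u y b \<and> cost\<^sub>G u y b + lam * sqnorm \<gamma>1 \<le> cost\<^sub>F u y a"
      by blast
  next
    fix u y b assume "G u y b"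
    then obtain g2 g3 where b: "b = (g2, g3)"
      and feasible: "ddpc_feasible L11 L21 L22 L31 L32 L33 U Y xi u y g2 g3"
      unfolding G_def by (cases b) auto
    note a = ddpc_feasible_imp_deepc_feasible[OF xi feasible, folded \<gamma>1_def]
    show "\<exists>a. F u y a \<and> cost\<^sub>F u y a \<le> cost\<^sub>G u y b + lam * sqnorm \<gamma>1"
      using a unfolding F_def cost\<^sub>F_def cost\<^sub>G_def b by (auto simp: algebra_simps)
  qed
  then show ?thesis
    unfolding deepc_opt_eq_opt_trajectories ddpc_opt_eq_opt_trajectories
      F_def G_def cost\<^sub>F_def cost\<^sub>G_def by simp
qed

end

theorem proposition3:
  fixes m p Np Nf ell n4 :: nat
    and Wp Uf Yf L11 L21 L22 L31 L32 L33 Q1 Q2 Q3 Q4 :: "real mat"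
    and lam :: real
    and J :: "real vec \<Rightarrow> real vec \<Rightarrow> real vec \<Rightarrow> real"
    and U Y :: "real vec set"
  defines "n1 \<equiv> Np * (m + p)" and "n2 \<equiv> m * Nf" and "n3 \<equiv> p * Nf"
  defines "D \<equiv> Wp @\<^sub>r Uf @\<^sub>r Yf"
      and "Q \<equiv> Q1 @\<^sub>r Q2 @\<^sub>r Q3 @\<^sub>r Q4"
  assumes Wp: "Wp \<in> carrier_mat n1 ell"
    and Uf: "Uf \<in> carrier_mat n2 ell"
    and Yf: "Yf \<in> carrier_mat n3 ell"
    and full_row_rank: "vec_space.rank (n1 + n2 + n3) D = n1 + n2 + n3"
    and L11: "L11 \<in> carrier_mat n1 n1" and L21: "L21 \<in> carrier_mat n2 n1"
    and L22: "L22 \<in> carrier_mat n2 n2" and L31: "L31 \<in> carrier_mat n3 n1"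
    and L32: "L32 \<in> carrier_mat n3 n2" and L33: "L33 \<in> carrier_mat n3 n3"
    and inv11: "invertible_mat L11" and inv22: "invertible_mat L22"
    and inv33: "invertible_mat L33"
    and Q1: "Q1 \<in> carrier_mat n1 ell" and Q2: "Q2 \<in> carrier_mat n2 ell"
    and Q3: "Q3 \<in> carrier_mat n3 ell" and Q4: "Q4 \<in> carrier_mat n4 ell"
    and Q_square: "Q \<in> carrier_mat ell ell"
    and Q_orth: "Q * Q\<^sup>T = 1\<^sub>m ell"
    and LQ_W: "Wp = L11 * Q1"
    and LQ_U: "Uf = L21 * Q1 + L22 * Q2"
    and LQ_Y: "Yf = L31 * Q1 + L32 * Q2 + L33 * Q3"
    and lam_pos: "lam > 0"
    and U: "U \<subseteq> carrier_vec n2"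
    and Y: "Y \<subseteq> carrier_vec n3"
  shows "equivalent_ocp n1
           (deepc_opt J (\<lambda>a. lam * sqnorm a) D ell U Y)
           (ddpc_opt J (\<lambda>(g1, g2, g3, g4). lam * sqnorm g2 + lam * sqnorm g3)
              L11 L21 L22 L31 L32 L33 n4 U Y)"
proof -
  interpret lq_data n1 n2 n3 n4 ell L11 L21 L22 L31 L32 L33 Q1 Q2 Q3 Q4 Q D
    using L11 L21 L22 L31 L32 L33 inv11 Q1 Q2 Q3 Q4 Q_square Q_orth
    unfolding lq_data_def Q_def D_def LQ_W LQ_U LQ_Y by blast
  show ?thesis
    unfolding equivalent_ocp_def
    using deepc_ridge_opt_eq_ddpc_opt[OF less_imp_le[OF lam_pos] U Y] by blast
qed

end
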